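(* Let $X$ be an infinite ultrahomogeneous chain with the order topology, $G=(\mathrm{Aut}(X),\tau_p)$, and $cX=c_mX/(\inf\sim\sup)$. Then neither $e_{c_mX}G$ nor $e_{cX}G$ is an sm-compactification of $G$.
   Context: Ultrahomogeneous chain: for all $x_1<\dots<x_n$, $y_1<\dots<y_n$ there is an order automorphism with $g(x_k)=y_k$. $\tau_p$: topology of pointwise convergence. $c_mX$: $X$ plus one point per gap (cut $(A,B)$, $A<B$, $A$ without max, $B$ without min, including $\inf$, $\sup$), order topology. $e_KG$ is the closure of $\{x\mapsto gx:g\in G\}$ in $K^K$ with product topology, a right topological monoid under composition. An sm-compactification of $G$ is a compactification $bG$ with continuous extended left action of $G$ which is a semitopological monoid (separately continuous multiplication) whose multiplication restricted to $G\times bG$ is the extended left action. *)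

theory Defs
  imports "HOL-Analysis.Analysis" "HOL-Library.FuncSet"
begin

definition order_aut :: "('a::linorder \<Rightarrow> 'a) set" where
  "order_aut = {g. bij g \<and> strict_mono g}"

definition ultrahomogeneous :: "'a::linorder itself \<Rightarrow> bool" where
  "ultrahomogeneous _ \<longleftrightarrow>
     (\<forall>xs ys :: 'a list. length xs = length ys \<and> sorted_wrt (<) xs \<and> sorted_wrt (<) ys \<longrightarrow>
        (\<exists>g\<in>order_aut. \<forall>k<length xs. g (xs ! k) = ys ! k))"

text \<open>G = (Aut(X), tau_p): subspace of the product (pointwise convergence) topology
  on X^X, X carrying its order topology.\<close>
definition aut_top :: "('a::linorder_topology \<Rightarrow> 'a) topology" where
  "aut_top = subtopology (product_topology (\<lambda>_. (euclidean :: 'a topology)) UNIV) order_aut"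

text \<open>Points of c_m X are represented by lower cuts D: a point x is represented by
  the set of elements below x, a gap (A,B) (including inf and sup) by A.\<close>
definition cm_points :: "'a::linorder set set" where
  "cm_points = {D. (\<forall>x\<in>D. \<forall>y. y \<le> x \<longrightarrow> y \<in> D) \<and>
      ((\<exists>x. D = {y. y < x}) \<or>
       ((\<forall>x\<in>D. \<exists>y\<in>D. x < y) \<and> (\<forall>x. x \<notin> D \<longrightarrow> (\<exists>y. y \<notin> D \<and> y < x))))}"

text \<open>The order of c_m X is inclusion of lower cuts; order topology generated by the open rays.\<close>
definition cm_top :: "'a::linorder set topology" where
  "cm_top = topology_generated_by
     ({cm_points} \<union> {{E\<in>cm_points. E \<subset> D} | D. D \<in> cm_points}
                  \<union> {{E\<in>cm_points. D \<subset> E} | D. D \<in> cm_points})"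

definition quotient_top :: "'x topology \<Rightarrow> ('x \<Rightarrow> 'y) \<Rightarrow> 'y set \<Rightarrow> 'y topology" where
  "quotient_top T q S = topology (\<lambda>U. U \<subseteq> S \<and> openin T {x\<in>topspace T. q x \<in> U})"

text \<open>c X = c_m X / (inf ~ sup): the class {inf, sup} is represented by inf = {}.\<close>
definition c_quot :: "'a::linorder set \<Rightarrow> 'a set" where
  "c_quot D = (if D = UNIV then {} else D)"

definition c_points :: "'a::linorder set set" where
  "c_points = c_quot ` cm_points"

definition c_top :: "'a::linorder set topology" where
  "c_top = quotient_top cm_top c_quot c_points"

definition ext_aut :: "('a \<Rightarrow> 'a) \<Rightarrow> 'a set \<Rightarrow> 'a set" where
  "ext_aut g D = g ` D"

definition env_emb :: "'k topology \<Rightarrow> ('g \<Rightarrow> 'k \<Rightarrow> 'k) \<Rightarrow> 'g \<Rightarrow> ('k \<Rightarrow> 'k)" where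
  "env_emb K act g = restrict (act g) (topspace K)"

definition env_top :: "'k topology \<Rightarrow> ('g \<Rightarrow> 'k \<Rightarrow> 'k) \<Rightarrow> 'g set \<Rightarrow> ('k \<Rightarrow> 'k) topology" where
  "env_top K act G =
     subtopology (product_topology (\<lambda>_. K) (topspace K))
       ((product_topology (\<lambda>_. K) (topspace K)) closure_of (env_emb K act ` G))"

definition env_mult :: "'k topology \<Rightarrow> ('k \<Rightarrow> 'k) \<Rightarrow> ('k \<Rightarrow> 'k) \<Rightarrow> ('k \<Rightarrow> 'k)" where
  "env_mult K p q = compose (topspace K) p q"

definition semitopological_monoid :: "'b topology \<Rightarrow> ('b \<Rightarrow> 'b \<Rightarrow> 'b) \<Rightarrow> bool" where
  "semitopological_monoid B m \<longleftrightarrow>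
     (\<forall>p\<in>topspace B. \<forall>q\<in>topspace B. m p q \<in> topspace B) \<and>
     (\<forall>p\<in>topspace B. \<forall>q\<in>topspace B. \<forall>r\<in>topspace B. m (m p q) r = m p (m q r)) \<and>
     (\<exists>u\<in>topspace B. \<forall>p\<in>topspace B. m u p = p \<and> m p u = p) \<and>
     (\<forall>p\<in>topspace B. continuous_map B B (m p) \<and> continuous_map B B (\<lambda>q. m q p))"

definition sm_compactification ::
  "'g topology \<Rightarrow> ('g \<Rightarrow> 'g \<Rightarrow> 'g) \<Rightarrow> ('g \<Rightarrow> 'b) \<Rightarrow> 'b topology \<Rightarrow> ('b \<Rightarrow> 'b \<Rightarrow> 'b) \<Rightarrow> bool" where
  "sm_compactification Gt gmul nu B m \<longleftrightarrow>
     compact_space B \<and> Hausdorff_space B \<and>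
     continuous_map Gt B nu \<and> B closure_of (nu ` topspace Gt) = topspace B \<and>
     (\<exists>\<alpha>. continuous_map (prod_topology Gt B) B (\<lambda>(g, p). \<alpha> g p) \<and>
          (\<forall>g\<in>topspace Gt. \<forall>h\<in>topspace Gt. \<alpha> g (nu h) = nu (gmul g h)) \<and>
          (\<forall>g\<in>topspace Gt. \<forall>p\<in>topspace B. m (nu g) p = \<alpha> g p)) \<and>
     semitopological_monoid B m"

end

(*
  Fix a < b and let p send {} and X to themselves, every other cut contained in (-inf, a)
  to the point a, and every remaining cut to the point b.  Given finitely many cuts,
  ultrahomogeneity provides an automorphism that squeezes those of the first kind into a
  small neighbourhood of a and those of the second kind into a small neighbourhood of b;
  hence p lies in the closure e_K G of G.  On the other hand, automorphisms that move a
  slightly upwards while fixing everything outside a small interval around a converge to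
  the identity, yet p maps their images of the point a to b, whereas p fixes a.  So
  left multiplication by p is not continuous, and e_K G is not a semitopological monoid.
  The argument only uses neighbourhoods of points of X and the order structure of the
  cuts, so it applies verbatim to cX, where X is identified with {}.
*)
theory Submission
  imports Defs
begin

section \<open>Order automorphisms\<close>

lemma ultrahomogeneousE:
  assumes "ultrahomogeneous TYPE('a::linorder)" "successively (<) xs" "successively (<) ys"
    and "length xs = length (ys :: 'a list)"
  obtains g where "g \<in> order_aut" "map g xs = ys"
proof -
  obtain g where "g \<in> order_aut" "\<forall>k<length xs. g (xs ! k) = ys ! k"
    using assms successively_conv_sorted_wrt[OF transp_on_less]
    unfolding ultrahomogeneous_def by blast
  with assms(4) show ?thesis by (intro that) (auto intro: nth_equalityI)
qed

lemma order_aut_less_iff: "g \<in> order_aut \<Longrightarrow> g x < g y \<longleftrightarrow> x < y"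
  unfolding order_aut_def by (auto simp: strict_mono_less)

lemma order_aut_le_iff: "g \<in> order_aut \<Longrightarrow> g x \<le> g y \<longleftrightarrow> x \<le> y"
  unfolding order_aut_def by (auto simp: strict_mono_less_eq)

lemma order_aut_surj: "g \<in> order_aut \<Longrightarrow> surj g"
  unfolding order_aut_def by (simp add: bij_is_surj)

lemma id_in_order_aut: "id \<in> order_aut"
  unfolding order_aut_def by (simp add: strict_mono_def)

lemma order_aut_image_lessThan:
  assumes "g \<in> order_aut" shows "g ` {..<z} = {..<g z}"
  using order_aut_surj[OF assms] by (force simp: order_aut_less_iff[OF assms])

lemma order_aut_image_eq:
  assumes "g \<in> order_aut" "\<And>x. g x \<in> E \<longleftrightarrow> x \<in> E"
  shows "g ` E = E"
proof -
  have "g -` E = E" using assms(2) by auto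
  then show ?thesis using image_vimage_eq[of g E] order_aut_surj[OF assms(1)] by simp
qed

lemma order_aut_glue:
  assumes h: "h \<in> order_aut" and "h l = l" "h r = r"
  shows "(\<lambda>x. if l < x \<and> x < r then h x else x) \<in> order_aut" (is "?g \<in> _")
proof -
  have inside: "l < h x \<and> h x < r \<longleftrightarrow> l < x \<and> x < r" for x
    using order_aut_less_iff[OF h, of l x] order_aut_less_iff[OF h, of x r] assms(2,3) by simp
  have "strict_mono ?g"
  proof
    fix x y :: 'a assume "x < y"
    then show "?g x < ?g y"
      using inside[of x] inside[of y] order_aut_less_iff[OF h, of x y] by auto
  qed
  moreover have "surj ?g"
    unfolding surj_def
  proof
    fix y
    obtain x where "y = h x" using order_aut_surj[OF h] by blast
    then have "l < y \<and> y < r \<Longrightarrow> y = ?g x" using inside[of x] by simp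
    moreover have "y = ?g y" if "\<not> (l < y \<and> y < r)" using if_not_P[OF that] by (rule sym)
    ultimately show "\<exists>x. y = ?g x" by blast
  qed
  ultimately show ?thesis
    unfolding order_aut_def by (simp add: bij_def strict_mono_on_imp_inj_on)
qed

section \<open>Cuts\<close>

lemma cm_points_down_closed: "E \<in> cm_points \<Longrightarrow> x \<in> E \<Longrightarrow> y \<le> x \<Longrightarrow> y \<in> E"
  by (auto simp: cm_points_def)

lemma cm_points_subset_lessThan: "E \<in> cm_points \<Longrightarrow> x \<notin> E \<Longrightarrow> E \<subseteq> {..<x}"
  by (meson cm_points_down_closed lessThan_iff not_le subsetI)

lemma lessThan_psubset_cm_points: "E \<in> cm_points \<Longrightarrow> x \<in> E \<Longrightarrow> {..<x} \<subset> E"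
  using cm_points_down_closed by fastforce

lemma lessThan_psubset_imp_mem: "E \<in> cm_points \<Longrightarrow> {..<z} \<subset> E \<Longrightarrow> z \<in> E"
  by (meson cm_points_down_closed lessThan_iff not_le psubsetE subsetI)

lemma cm_points_linear: "E \<in> cm_points \<Longrightarrow> D \<in> cm_points \<Longrightarrow> E \<subseteq> D \<or> D \<subseteq> E"
  using cm_points_subset_lessThan lessThan_psubset_cm_points by blast

lemma lessThan_in_cm_points: "{..<z} \<in> cm_points"
  by (auto simp: cm_points_def lessThan_def)

lemma order_aut_image_cm_points:
  assumes g: "g \<in> order_aut" and E: "E \<in> cm_points"
  shows "g ` E \<in> cm_points"
proof -
  have g_iff: "g x \<in> g ` E \<longleftrightarrow> x \<in> E" for x
    using g unfolding order_aut_def by (auto dest: bij_is_inj injD)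
  have all_g: "(\<forall>y. Q y) \<longleftrightarrow> (\<forall>x. Q (g x))" for Q
    using order_aut_surj[OF g] by (metis surjD)
  have "\<forall>x\<in>g ` E. \<forall>y. y \<le> x \<longrightarrow> y \<in> g ` E"
    unfolding all_g[of "\<lambda>y. y \<le> _ \<longrightarrow> y \<in> g ` E"]
    using cm_points_down_closed[OF E] by (auto simp: order_aut_le_iff[OF g] g_iff)
  moreover from E consider (point) z where "E = {..<z}"
    | (gap) "\<forall>x\<in>E. \<exists>y\<in>E. x < y" "\<forall>x. x \<notin> E \<longrightarrow> (\<exists>y. y \<notin> E \<and> y < x)"
    unfolding cm_points_def lessThan_def by blast
  then have "(\<exists>x. g ` E = {y. y < x}) \<or>
      ((\<forall>x\<in>g ` E. \<exists>y\<in>g ` E. x < y) \<and> (\<forall>x. x \<notin> g ` E \<longrightarrow> (\<exists>y. y \<notin> g ` E \<and> y < x)))"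
  proof cases
    case point
    then show ?thesis using order_aut_image_lessThan[OF g] by (auto simp: lessThan_def)
  next
    case gap
    then show ?thesis
      unfolding all_g[of "\<lambda>x. x \<notin> g ` E \<longrightarrow> _ x"]
      by (auto simp: g_iff order_aut_less_iff[OF g] ex_in_conv) (metis g_iff order_aut_less_iff[OF g])
  qed
  ultimately show ?thesis unfolding cm_points_def by blast
qed

lemma order_aut_image_cm_points_below:
  assumes g: "g \<in> order_aut" and "E \<in> cm_points" "E \<subseteq> {..<l}"
    and fixed: "\<And>x. x \<le> l \<Longrightarrow> g x = x"
  shows "g ` E = E"
proof (rule order_aut_image_eq[OF g])
  fix x
  show "g x \<in> E \<longleftrightarrow> x \<in> E"
  proof (cases "x \<le> l")
    case False
    then have "l < g x" using order_aut_less_iff[OF g, of l x] fixed[of l] by simp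
    then show ?thesis using False assms(3) by auto
  qed (simp add: fixed)
qed

lemma order_aut_image_cm_points_above:
  assumes g: "g \<in> order_aut" and E: "E \<in> cm_points" "r \<in> E"
    and fixed: "\<And>x. r \<le> x \<Longrightarrow> g x = x"
  shows "g ` E = E"
proof (rule order_aut_image_eq[OF g])
  fix x
  show "g x \<in> E \<longleftrightarrow> x \<in> E"
  proof (cases "r \<le> x")
    case False
    then have "g x < r" using order_aut_less_iff[OF g, of x r] fixed[of r] by simp
    then show ?thesis using False cm_points_down_closed[OF E] by (meson less_imp_le not_le)
  qed (simp add: fixed)
qed

lemma cm_points_common_member:
  assumes "finite F" "F \<subseteq> cm_points" "\<And>E. E \<in> F \<Longrightarrow> E \<noteq> {}"
  shows "\<exists>x. x \<le> c \<and> (\<forall>E\<in>F. x \<in> E)"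
  using assms
proof (induction F rule: finite_induct)
  case (insert E F)
  obtain x where "x \<le> c" "\<forall>D\<in>F. x \<in> D" using insert by auto
  moreover obtain y where "y \<in> E" using insert.prems by auto
  ultimately show ?case using insert.prems
    by (intro exI[of _ "min x y"]) (auto simp: min_le_iff_disj intro: cm_points_down_closed)
qed (blast intro: order_refl)

lemma cm_points_common_member_above:
  assumes "finite F" "F \<subseteq> cm_points" "\<And>E. E \<in> F \<Longrightarrow> \<exists>x\<in>E. a < x" "a < c"
  shows "\<exists>x. a < x \<and> x \<le> c \<and> (\<forall>E\<in>F. x \<in> E)"
  using assms
proof (induction F rule: finite_induct)
  case (insert E F)
  obtain x where "a < x" "x \<le> c" "\<forall>D\<in>F. x \<in> D" using insert by auto
  moreover obtain y where "y \<in> E" "a < y" using insert.prems by auto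
  ultimately show ?case using insert.prems
    by (intro exI[of _ "min x y"]) (auto simp: min_le_iff_disj intro: cm_points_down_closed)
qed auto

lemma cm_points_common_bound:
  assumes "finite F" "F \<subseteq> cm_points" "\<And>E. E \<in> F \<Longrightarrow> E \<noteq> UNIV"
  shows "\<exists>x. c \<le> x \<and> (\<forall>E\<in>F. E \<subseteq> {..<x})"
  using assms
proof (induction F rule: finite_induct)
  case (insert E F)
  obtain x where "c \<le> x" "\<forall>D\<in>F. D \<subseteq> {..<x}" using insert by auto
  moreover obtain y where "y \<notin> E" using insert.prems by auto
  ultimately show ?case using insert.prems cm_points_subset_lessThan[of E y]
    by (intro exI[of _ "max x y"]) (auto simp: le_max_iff_disj less_max_iff_disj subset_iff)
qed (blast intro: order_refl)

lemma cm_points_common_bound_below: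
  assumes "finite F" "F \<subseteq> cm_points" "\<And>E. E \<in> F \<Longrightarrow> \<exists>x<a. x \<notin> E" "c < a"
  shows "\<exists>x. c \<le> x \<and> x < a \<and> (\<forall>E\<in>F. E \<subseteq> {..<x})"
  using assms
proof (induction F rule: finite_induct)
  case (insert E F)
  obtain x where "c \<le> x" "x < a" "\<forall>D\<in>F. D \<subseteq> {..<x}" using insert by auto
  moreover obtain y where "y \<notin> E" "y < a" using insert.prems by auto
  ultimately show ?case using insert.prems cm_points_subset_lessThan[of E y]
    by (intro exI[of _ "max x y"]) (auto simp: le_max_iff_disj less_max_iff_disj subset_iff)
qed auto

section \<open>The topologies of c_m X and c X\<close>

definition cut_interval :: "'a::linorder set set \<Rightarrow> 'a \<Rightarrow> 'a \<Rightarrow> 'a set set" where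
  "cut_interval P l r = {E \<in> P. {..<l} \<subset> E \<and> E \<subset> {..<r}}"

lemma cut_interval_mono:
  assumes "l \<le> l'" "r' \<le> r" shows "cut_interval P l' r' \<subseteq> cut_interval P l r"
proof -
  have "{..<l} \<subseteq> {..<l'}" "{..<r'} \<subseteq> {..<r}" using assms by simp_all
  then show ?thesis
    unfolding cut_interval_def
    using subset_psubset_trans[of "{..<l}" "{..<l'}"] psubset_subset_trans[of _ "{..<r'}" "{..<r}"]
    by (auto simp del: lessThan_subset_iff)
qed

lemma lessThan_in_cut_interval: "{..<z} \<in> P \<Longrightarrow> l < z \<Longrightarrow> z < r \<Longrightarrow> {..<z} \<in> cut_interval P l r"
  unfolding cut_interval_def by (simp add: lessThan_strict_subset_iff)

lemma order_aut_image_in_cut_interval: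
  assumes g: "g \<in> order_aut" and "E \<in> cm_points" "x \<in> E" "E \<subseteq> {..<y}" "g y < r"
  shows "g ` E \<in> cut_interval cm_points (g x) r"
proof -
  have "{..<g x} \<subset> g ` E"
    using lessThan_psubset_cm_points[OF order_aut_image_cm_points[OF g assms(2)]] assms(3) by blast
  moreover have "g ` E \<subseteq> {..<g y}"
    using image_mono[OF assms(4), of g] order_aut_image_lessThan[OF g] by simp
  then have "g ` E \<subset> {..<r}"
    using assms(5) by (auto simp: subset_iff dest: spec[of _ "g y"])
  ultimately show ?thesis
    using order_aut_image_cm_points[OF g assms(2)] by (simp add: cut_interval_def)
qed

lemma topspace_cm_top: "topspace cm_top = cm_points"
  unfolding cm_top_def by auto

lemma openin_cm_top_cut_interval: "openin cm_top (cut_interval cm_points l r)"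
proof -
  let ?S = "{cm_points} \<union> {{E\<in>cm_points. E \<subset> D} | D. D \<in> cm_points}
      \<union> {{E\<in>cm_points. D \<subset> E} | D. D \<in> cm_points}"
  have "cut_interval cm_points l r = {E\<in>cm_points. {..<l} \<subset> E} \<inter> {E\<in>cm_points. E \<subset> {..<r}}"
    unfolding cut_interval_def by auto
  moreover have "generate_topology_on ?S ({E\<in>cm_points. {..<l} \<subset> E} \<inter> {E\<in>cm_points. E \<subset> {..<r}})"
    by (intro generate_topology_on.Int generate_topology_on.Basis) (auto intro: lessThan_in_cm_points)
  ultimately show ?thesis
    unfolding cm_top_def openin_topology_generated_by_iff by simp
qed

lemma istopology_quotient: "istopology (\<lambda>U. U \<subseteq> S \<and> openin T {x \<in> topspace T. q x \<in> U})"
proof -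
  have "{x \<in> topspace T. q x \<in> U \<inter> V} = {x \<in> topspace T. q x \<in> U} \<inter> {x \<in> topspace T. q x \<in> V}"
    "{x \<in> topspace T. q x \<in> \<Union>\<U>} = (\<Union>U\<in>\<U>. {x \<in> topspace T. q x \<in> U})" for U V \<U>
    by auto
  then show ?thesis
    unfolding istopology_def by (auto intro: openin_Int openin_Union)
qed

lemma openin_c_top: "openin c_top U \<longleftrightarrow> U \<subseteq> c_points \<and> openin cm_top {x \<in> cm_points. c_quot x \<in> U}"
  unfolding c_top_def quotient_top_def topology_inverse'[OF istopology_quotient]
  by (simp add: topspace_cm_top)

lemma topspace_c_top: "topspace c_top = c_points"
proof -
  have "{x \<in> cm_points. c_quot x \<in> c_points} = cm_points"
    by (auto simp: c_points_def)
  then have "openin c_top c_points"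
    unfolding openin_c_top by (metis openin_topspace order_refl topspace_cm_top)
  then show ?thesis using openin_subset openin_c_top topspace_def by blast
qed

section \<open>Ultrahomogeneous chains\<close>

locale ultrahomogeneous_chain =
  fixes chain :: "'a::linorder itself"
  assumes ultrahomogeneous: "ultrahomogeneous TYPE('a)"
    and nontrivial: "\<exists>u v :: 'a. u < v"
begin

lemma exists_greater: "\<exists>y. (x::'a) < y"
proof -
  obtain u v :: 'a where "u < v" using nontrivial by blast
  moreover obtain g where "g \<in> order_aut" "map g [u] = [x]"
    using ultrahomogeneousE[OF ultrahomogeneous, of "[u]" "[x]"] by auto
  ultimately show ?thesis using order_aut_less_iff by fastforce
qed

lemma exists_less: "\<exists>y. y < (x::'a)"
proof -
  obtain u v :: 'a where "u < v" using nontrivial by blast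
  moreover obtain g where "g \<in> order_aut" "map g [v] = [x]"
    using ultrahomogeneousE[OF ultrahomogeneous, of "[v]" "[x]"] by auto
  ultimately show ?thesis using order_aut_less_iff by fastforce
qed

lemma exists_between: "(x::'a) < y \<Longrightarrow> \<exists>z. x < z \<and> z < y"
proof -
  assume "x < y"
  obtain u v :: 'a where "u < v" using nontrivial by blast
  moreover obtain w where "v < w" using exists_greater by blast
  moreover obtain g where "g \<in> order_aut" "map g [u, w] = [x, y]"
    using ultrahomogeneousE[OF ultrahomogeneous, of "[u, w]" "[x, y]"] \<open>x < y\<close>
      less_trans[OF \<open>u < v\<close> \<open>v < w\<close>] by auto
  ultimately show ?thesis using order_aut_less_iff by fastforce
qed

lemma cm_points_no_max: "E \<in> cm_points \<Longrightarrow> x \<in> E \<Longrightarrow> \<exists>y\<in>E. (x::'a) < y"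
  using exists_between unfolding cm_points_def by fastforce

lemma cm_points_member_above:
  assumes "E \<in> cm_points" "\<not> E \<subseteq> {..<a}"
  shows "\<exists>x\<in>E. (a::'a) < x"
proof -
  obtain x where "x \<in> E" "a \<le> x" using assms(2) by (auto simp: subset_iff not_less)
  moreover obtain y where "y \<in> E" "x < y" using cm_points_no_max[OF assms(1) \<open>x \<in> E\<close>] by blast
  ultimately show ?thesis using le_less_trans[of a x y] by blast
qed

lemma empty_in_cm_points: "({} :: 'a set) \<in> cm_points"
  using exists_less by (auto simp: cm_points_def)

lemma local_shift:
  assumes "l < a" "a < a'" "a' < (r::'a)"
  obtains g where "g \<in> order_aut" "g a = a'" "\<And>x. x \<le> l \<or> r \<le> x \<Longrightarrow> g x = x"
proof -
  have "l < a'" "a < r" using assms by auto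
  obtain h where h: "h \<in> order_aut" "map h [l, a, r] = [l, a', r]"
    using ultrahomogeneousE[OF ultrahomogeneous, of "[l, a, r]" "[l, a', r]"] assms \<open>l < a'\<close> \<open>a < r\<close>
    by auto
  show ?thesis
  proof (rule that)
    show "(\<lambda>x. if l < x \<and> x < r then h x else x) \<in> order_aut"
      using order_aut_glue[of h l r] h by simp
    show "(if l < a \<and> a < r then h a else a) = a'" using h assms \<open>a < r\<close> by simp
    show "(if l < x \<and> x < r then h x else x) = x" if "x \<le> l \<or> r \<le> x" for x
      using that by (auto dest: leD)
  qed
qed

lemma finite_cuts_gap:
  assumes "finite F" "F \<subseteq> cm_points" "l0 < a" "a < (r0::'a)"
  obtains l r where "l0 \<le> l" "l < a" "a < r" "r \<le> r0"
    "\<forall>E\<in>F. E \<subset> {..<a} \<longrightarrow> E \<subseteq> {..<l}" "\<forall>E\<in>F. {..<a} \<subset> E \<longrightarrow> r \<in> E"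
proof -
  let ?Fa = "{E \<in> F. E \<subset> {..<a}}" and ?Fb = "{E \<in> F. {..<a} \<subset> E}"
  have fin: "finite ?Fa" "finite ?Fb" and sub: "?Fa \<subseteq> cm_points" "?Fb \<subseteq> cm_points"
    using assms(1,2) by auto
  have "\<exists>x<a. x \<notin> E" if "E \<in> ?Fa" for E using that by auto
  then obtain l where "l0 \<le> l" "l < a" "\<forall>E\<in>?Fa. E \<subseteq> {..<l}"
    using cm_points_common_bound_below[OF fin(1) sub(1) _ assms(3)] by blast
  moreover have "\<exists>x\<in>E. a < x" if "E \<in> ?Fb" for E
    using that sub(2) lessThan_psubset_imp_mem cm_points_no_max by blast
  then obtain r where "a < r" "r \<le> r0" "\<forall>E\<in>?Fb. r \<in> E"
    using cm_points_common_member_above[OF fin(2) sub(2) _ assms(4)] by blast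
  ultimately show ?thesis using that by auto
qed

lemma order_aut_shift_fixing_cuts:
  assumes "finite F" "F \<subseteq> cm_points" "l < a" "a < (r::'a)"
  obtains g where "g \<in> order_aut" "a < g a" "g a < r" "\<And>E. E \<in> F \<Longrightarrow> E \<noteq> {..<a} \<Longrightarrow> g ` E = E"
proof -
  obtain l' r' where "l \<le> l'" "l' < a" "a < r'" "r' \<le> r"
    and below: "\<forall>E\<in>F. E \<subset> {..<a} \<longrightarrow> E \<subseteq> {..<l'}" and above: "\<forall>E\<in>F. {..<a} \<subset> E \<longrightarrow> r' \<in> E"
    using finite_cuts_gap[OF assms] by blast
  obtain a' where "a < a'" "a' < r'" using exists_between \<open>a < r'\<close> by blast
  obtain g where g: "g \<in> order_aut" "g a = a'" and fixed: "\<And>x. x \<le> l' \<or> r' \<le> x \<Longrightarrow> g x = x"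
    using local_shift[OF \<open>l' < a\<close> \<open>a < a'\<close> \<open>a' < r'\<close>] by blast
  have "g ` E = E" if E: "E \<in> F" "E \<noteq> {..<a}" for E
  proof -
    have "E \<in> cm_points" using E assms(2) by blast
    then consider "E \<subset> {..<a}" | "{..<a} \<subset> E"
      using cm_points_linear lessThan_in_cm_points E(2) by blast
    then show ?thesis
    proof cases
      case 1
      then show ?thesis
        using order_aut_image_cm_points_below[OF g(1) \<open>E \<in> cm_points\<close>, of l'] below E fixed by blast
    next
      case 2
      then show ?thesis
        using order_aut_image_cm_points_above[OF g(1) \<open>E \<in> cm_points\<close>, of r'] above E fixed by blast
    qed
  qed
  then show ?thesis
    using g \<open>a < a'\<close> \<open>a' < r'\<close> \<open>r' \<le> r\<close> by (intro that[of g]) auto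
qed

lemma order_aut_squeeze_cuts:
  assumes "finite F1" "F1 \<subseteq> cm_points" "\<And>E. E \<in> F1 \<Longrightarrow> E \<noteq> {} \<and> E \<subseteq> {..<a}"
    and "finite F2" "F2 \<subseteq> cm_points" "\<And>E. E \<in> F2 \<Longrightarrow> E \<noteq> UNIV \<and> \<not> E \<subseteq> {..<a}"
    and "l1 < a" "a < r1" "a < b" "l2 < b" "b < (r2::'a)"
  obtains g where "g \<in> order_aut"
    "\<And>E. E \<in> F1 \<Longrightarrow> g ` E \<in> cut_interval cm_points l1 r1"
    "\<And>E. E \<in> F2 \<Longrightarrow> g ` E \<in> cut_interval cm_points l2 r2"
proof -
  obtain c0 c1 where "c0 < a" "a < c1" using exists_less exists_greater by blast
  obtain x1 where x1: "x1 \<le> c0" "\<forall>E\<in>F1. x1 \<in> E"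
    using cm_points_common_member[OF assms(1,2), of c0] assms(3) by auto
  have above: "\<exists>x\<in>E. a < x" if "E \<in> F2" for E
    using cm_points_member_above[of E a] assms(5,6) that by blast
  then obtain x3 where x3: "a < x3" "\<forall>E\<in>F2. x3 \<in> E"
    using cm_points_common_member_above[OF assms(4,5) above \<open>a < c1\<close>] by auto
  obtain c2 where "x3 < c2" using exists_greater by blast
  obtain x4 where "c2 \<le> x4" and x4: "\<forall>E\<in>F2. E \<subseteq> {..<x4}"
    using cm_points_common_bound[OF assms(4,5), of c2] assms(6) by auto
  have "x1 < a" "x3 < x4"
    using x1(1) \<open>c0 < a\<close> \<open>x3 < c2\<close> \<open>c2 \<le> x4\<close> by (auto intro: le_less_trans less_le_trans)
  obtain s where s: "b < s" "s < r2" using exists_between assms(11) by blast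
  obtain g where g: "g \<in> order_aut" "map g [x1, a, x3, x4] = [l1, a, b, s]"
    using ultrahomogeneousE[OF ultrahomogeneous, of "[x1, a, x3, x4]" "[l1, a, b, s]"]
      \<open>x1 < a\<close> \<open>x3 < x4\<close> x3(1) s(1) assms(7,9) by auto
  show ?thesis
  proof
    fix E assume "E \<in> F1"
    then show "g ` E \<in> cut_interval cm_points l1 r1"
      using order_aut_image_in_cut_interval[OF g(1), of E x1 a r1] x1 g(2) assms(2,3,8) by auto
  next
    fix E assume "E \<in> F2"
    then have "g ` E \<in> cut_interval cm_points b r2"
      using order_aut_image_in_cut_interval[OF g(1), of E x3 x4 r2] x3 x4 g(2) s assms(5) by auto
    then show "g ` E \<in> cut_interval cm_points l2 r2"
      using cut_interval_mono[OF less_imp_le[OF assms(10)] order_refl, of cm_points] by blast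
  qed (rule g(1))
qed

lemma cm_top_lessThan_nhds:
  assumes "openin cm_top U" "{..<z} \<in> U"
  shows "\<exists>l r. l < z \<and> z < (r::'a) \<and> cut_interval cm_points l r \<subseteq> U"
  using assms(1) unfolding cm_top_def openin_topology_generated_by_iff
  using assms(2)
proof (induction rule: generate_topology_on.induct)
  case (Int U V)
  then obtain l1 r1 l2 r2 where "l1 < z" "z < r1" "cut_interval cm_points l1 r1 \<subseteq> U"
    "l2 < z" "z < r2" "cut_interval cm_points l2 r2 \<subseteq> V" by auto
  then show ?case
    using cut_interval_mono[of l1 "max l1 l2" "min r1 r2" r1 cm_points]
      cut_interval_mono[of l2 "max l1 l2" "min r1 r2" r2 cm_points]
    by (intro exI[of _ "max l1 l2"] exI[of _ "min r1 r2"]) auto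
next
  case (UN K)
  then show ?case by blast
next
  case (Basis S)
  obtain l r where "l < z" "z < r" using exists_less exists_greater by blast
  from Basis.hyps consider "S = cm_points"
    | (below) D where "D \<in> cm_points" "S = {E\<in>cm_points. E \<subset> D}"
    | (above) D where "D \<in> cm_points" "S = {E\<in>cm_points. D \<subset> E}" by blast
  then show ?case
  proof cases
    case 1
    then show ?thesis using \<open>l < z\<close> \<open>z < r\<close> by (auto simp: cut_interval_def)
  next
    case below
    then have "z \<in> D" using Basis.prems lessThan_psubset_imp_mem by blast
    then obtain d where "d \<in> D" "z < d" using cm_points_no_max below(1) by blast
    then have "cut_interval cm_points l d \<subseteq> S"
      using lessThan_psubset_cm_points[OF below(1)] below(2) by (auto simp: cut_interval_def)
    then show ?thesis using \<open>l < z\<close> \<open>z < d\<close> by blast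
  next
    case above
    then obtain e where "e < z" "e \<notin> D" using Basis.prems by auto
    then have "cut_interval cm_points e r \<subseteq> S"
      using cm_points_subset_lessThan[OF above(1)] above(2) by (auto simp: cut_interval_def)
    then show ?thesis using \<open>e < z\<close> \<open>z < r\<close> by blast
  qed
qed simp

lemma c_points_eq: "(c_points :: 'a set set) = cm_points - {UNIV}"
  unfolding c_points_def c_quot_def using empty_in_cm_points by (auto simp: image_iff)

lemma c_points_subset: "(c_points :: 'a set set) \<subseteq> cm_points"
  by (simp add: c_points_eq)

lemma lessThan_in_c_points: "{..<z} \<in> (c_points :: 'a set set)"
  by (auto simp: c_points_eq lessThan_in_cm_points)

lemma cut_interval_c_points: "cut_interval c_points l r = cut_interval cm_points l (r::'a)"
  unfolding cut_interval_def c_points_eq by auto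

lemma c_quot_preimage_cut_interval:
  "{E \<in> cm_points. c_quot E \<in> cut_interval c_points l r} = cut_interval cm_points l (r::'a)"
  unfolding cut_interval_c_points by (auto simp: c_quot_def cut_interval_def)

lemma openin_c_top_cut_interval: "openin c_top (cut_interval c_points l (r::'a))"
  unfolding openin_c_top c_quot_preimage_cut_interval
  by (simp add: openin_cm_top_cut_interval) (auto simp: cut_interval_def)

lemma c_top_lessThan_nhds:
  assumes "openin c_top U" "{..<z} \<in> U"
  shows "\<exists>l r. l < z \<and> z < (r::'a) \<and> cut_interval c_points l r \<subseteq> U"
proof -
  have "{..<z} \<in> {E \<in> cm_points. c_quot E \<in> U}"
    using assms(2) lessThan_in_cm_points by (auto simp: c_quot_def)
  then obtain l r where lr: "l < z" "z < r"
    and sub: "cut_interval cm_points l r \<subseteq> {E \<in> cm_points. c_quot E \<in> U}"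
    using cm_top_lessThan_nhds assms(1) unfolding openin_c_top by blast
  have "c_quot E = E" if "E \<in> cut_interval cm_points l r" for E
    using that by (auto simp: c_quot_def cut_interval_def)
  then have "cut_interval cm_points l r \<subseteq> U" using sub by force
  then show ?thesis unfolding cut_interval_c_points using lr by blast
qed

lemma order_aut_image_c_points:
  assumes g: "g \<in> order_aut" and E: "E \<in> c_points"
  shows "g ` E \<in> (c_points :: 'a set set)"
proof -
  obtain x where "E \<in> cm_points" "x \<notin> E" using E unfolding c_points_eq by auto
  moreover have "g x \<notin> g ` E"
    using \<open>x \<notin> E\<close> g unfolding order_aut_def by (auto dest: bij_is_inj injD)
  ultimately show ?thesis
    unfolding c_points_eq using order_aut_image_cm_points[OF g] by auto
qed

end

section \<open>The enveloping semigroup is not semitopological\<close>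

definition collapse :: "'a::linorder \<Rightarrow> 'a \<Rightarrow> 'a set \<Rightarrow> 'a set" where
  "collapse a b E = (if E = {} \<or> E = UNIV then E else if E \<subseteq> {..<a} then {..<a} else {..<b})"

lemma collapse_below: "E \<noteq> {} \<Longrightarrow> E \<subseteq> {..<a} \<Longrightarrow> collapse a b E = {..<a}"
  by (auto simp: collapse_def)

lemma collapse_above: "E \<noteq> UNIV \<Longrightarrow> \<not> E \<subseteq> {..<a} \<Longrightarrow> collapse a b E = {..<b}"
  by (auto simp: collapse_def)

text \<open>What the argument needs from c_m X and from c X, where the point UNIV of c_m X
  is removed (identified with {}).\<close>

locale cut_space = ultrahomogeneous_chain chain for chain :: "'a::linorder itself" +
  fixes K :: "'a set topology" and P :: "'a set set"
  assumes topspace_K: "topspace K = P"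
    and points_subset: "P \<subseteq> cm_points"
    and lessThan_in_points: "{..<z} \<in> P"
    and order_aut_image_points: "g \<in> order_aut \<Longrightarrow> E \<in> P \<Longrightarrow> g ` E \<in> P"
    and lessThan_nhds: "openin K U \<Longrightarrow> {..<z} \<in> U \<Longrightarrow>
      \<exists>l r. l < z \<and> z < r \<and> cut_interval P l r \<subseteq> U"
    and openin_cut_interval: "openin K (cut_interval P l r)"
begin

abbreviation cut_power :: "('a set \<Rightarrow> 'a set) topology" where
  "cut_power \<equiv> product_topology (\<lambda>_. K) P"

abbreviation envelope :: "('a set \<Rightarrow> 'a set) topology" where
  "envelope \<equiv> env_top K ext_aut order_aut"

abbreviation emb :: "('a \<Rightarrow> 'a) \<Rightarrow> 'a set \<Rightarrow> 'a set" where
  "emb \<equiv> env_emb K ext_aut"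

lemma emb_eq: "emb g = restrict ((`) g) P"
  by (simp add: env_emb_def ext_aut_def[abs_def] topspace_K)

lemma envelope_eq: "envelope = subtopology cut_power (cut_power closure_of (emb ` order_aut))"
  by (simp add: env_top_def topspace_K)

lemma topspace_envelope: "topspace envelope = cut_power closure_of (emb ` order_aut)"
  unfolding envelope_eq topspace_subtopology by (rule Int_absorb1[OF closure_of_subset_topspace])

lemma emb_in_cut_power: "g \<in> order_aut \<Longrightarrow> emb g \<in> topspace cut_power"
  by (simp add: emb_eq restrict_PiE_iff topspace_K order_aut_image_points)

lemma emb_in_envelope:
  assumes "g \<in> order_aut" shows "emb g \<in> topspace envelope"
proof -
  have "emb ` order_aut \<subseteq> topspace cut_power" using emb_in_cut_power by blast
  from closure_of_subset[OF this] show ?thesis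
    unfolding topspace_envelope using assms by blast
qed

lemma emb_in_box:
  assumes "g \<in> order_aut" "\<And>E. E \<in> P \<Longrightarrow> U E \<noteq> P \<Longrightarrow> g ` E \<in> U E"
  shows "emb g \<in> Pi\<^sub>E P U"
  using assms order_aut_image_points by (fastforce simp: emb_eq)

lemma box_nhd:
  assumes "openin cut_power T" "f \<in> T"
  obtains U where "finite {E \<in> P. U E \<noteq> P}" "\<And>E. E \<in> P \<Longrightarrow> openin K (U E)"
    "f \<in> Pi\<^sub>E P U" "Pi\<^sub>E P U \<subseteq> T"
proof -
  have "\<exists>U. finite {E \<in> P. U E \<noteq> topspace K} \<and> (\<forall>E\<in>P. openin K (U E)) \<and>
      f \<in> Pi\<^sub>E P U \<and> Pi\<^sub>E P U \<subseteq> T"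
    using assms(1)[unfolded openin_product_topology_alt] assms(2) by (rule bspec)
  then obtain U where "finite {E \<in> P. U E \<noteq> P}" "\<forall>E\<in>P. openin K (U E)"
      "f \<in> Pi\<^sub>E P U" "Pi\<^sub>E P U \<subseteq> T"
    unfolding topspace_K by blast
  then show ?thesis by (intro that[of U]) auto
qed

lemma lessThan_nhds_finite:
  assumes "finite F" "\<And>E. E \<in> F \<Longrightarrow> openin K (U E)" "\<And>E. E \<in> F \<Longrightarrow> {..<z} \<in> U E"
  shows "\<exists>l r. l < z \<and> z < r \<and> (\<forall>E\<in>F. cut_interval P l r \<subseteq> U E)"
proof -
  have "openin K ((\<Inter>E\<in>F. U E) \<inter> topspace K)" using assms(1,2) by (rule openin_INT)
  moreover have "{..<z} \<in> (\<Inter>E\<in>F. U E) \<inter> topspace K"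
    using assms(3) lessThan_in_points topspace_K by auto
  ultimately have "\<exists>l r. l < z \<and> z < r \<and> cut_interval P l r \<subseteq> (\<Inter>E\<in>F. U E) \<inter> topspace K"
    by (rule lessThan_nhds)
  then show ?thesis by blast
qed

lemma collapse_in_points: "E \<in> P \<Longrightarrow> collapse a b E \<in> P"
  by (simp add: collapse_def lessThan_in_points)

lemma collapse_nhds:
  assumes "finite F" "\<And>E. E \<in> F \<Longrightarrow> openin K (U E)" "\<And>E. E \<in> F \<Longrightarrow> collapse a b E \<in> U E"
  obtains l1 r1 l2 r2 where "l1 < a" "a < r1" "l2 < b" "b < r2"
    "\<And>E. E \<in> F \<Longrightarrow> E \<noteq> {} \<Longrightarrow> E \<subseteq> {..<a} \<Longrightarrow> cut_interval P l1 r1 \<subseteq> U E"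
    "\<And>E. E \<in> F \<Longrightarrow> E \<noteq> UNIV \<Longrightarrow> \<not> E \<subseteq> {..<a} \<Longrightarrow> cut_interval P l2 r2 \<subseteq> U E"
proof -
  let ?F1 = "{E \<in> F. E \<noteq> {} \<and> E \<subseteq> {..<a}}" and ?F2 = "{E \<in> F. E \<noteq> UNIV \<and> \<not> E \<subseteq> {..<a}}"
  have fin: "finite ?F1" "finite ?F2" using assms(1) by auto
  have op: "\<And>E. E \<in> ?F1 \<Longrightarrow> openin K (U E)" "\<And>E. E \<in> ?F2 \<Longrightarrow> openin K (U E)"
    using assms(2) by auto
  have mem1: "{..<a} \<in> U E" if "E \<in> ?F1" for E
    using assms(3)[of E] that collapse_below[of E a b] by simp
  have mem2: "{..<b} \<in> U E" if "E \<in> ?F2" for E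
    using assms(3)[of E] that collapse_above[of E a b] by simp
  obtain l1 r1 where "l1 < a" "a < r1" "\<forall>E\<in>?F1. cut_interval P l1 r1 \<subseteq> U E"
    using lessThan_nhds_finite[where U = U, OF fin(1) op(1) mem1] by blast
  moreover obtain l2 r2 where "l2 < b" "b < r2" "\<forall>E\<in>?F2. cut_interval P l2 r2 \<subseteq> U E"
    using lessThan_nhds_finite[where U = U, OF fin(2) op(2) mem2] by blast
  ultimately show ?thesis by (intro that[of l1 r1 l2 r2]) auto
qed

lemma collapse_approx:
  assumes "a < b" and fin: "finite {E \<in> P. U E \<noteq> P}" and op: "\<And>E. E \<in> P \<Longrightarrow> openin K (U E)"
    and mem: "\<And>E. E \<in> P \<Longrightarrow> collapse a b E \<in> U E"
  obtains g where "g \<in> order_aut" "emb g \<in> Pi\<^sub>E P U"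
proof -
  have "\<And>E. E \<in> {E \<in> P. U E \<noteq> P} \<Longrightarrow> openin K (U E)"
    "\<And>E. E \<in> {E \<in> P. U E \<noteq> P} \<Longrightarrow> collapse a b E \<in> U E"
    using op mem by auto
  then obtain l1 r1 l2 r2 where "l1 < a" "a < r1" "l2 < b" "b < r2"
    and nhd1: "\<And>E. E \<in> {E \<in> P. U E \<noteq> P} \<Longrightarrow> E \<noteq> {} \<Longrightarrow> E \<subseteq> {..<a} \<Longrightarrow>
      cut_interval P l1 r1 \<subseteq> U E"
    and nhd2: "\<And>E. E \<in> {E \<in> P. U E \<noteq> P} \<Longrightarrow> E \<noteq> UNIV \<Longrightarrow> \<not> E \<subseteq> {..<a} \<Longrightarrow>
      cut_interval P l2 r2 \<subseteq> U E"
    using collapse_nhds[OF fin] by blast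
  define F1 where "F1 = {E \<in> P. U E \<noteq> P \<and> E \<noteq> {} \<and> E \<subseteq> {..<a}}"
  define F2 where "F2 = {E \<in> P. U E \<noteq> P \<and> E \<noteq> UNIV \<and> \<not> E \<subseteq> {..<a}}"
  have "finite F1" "finite F2" "F1 \<subseteq> cm_points" "F2 \<subseteq> cm_points"
    using fin points_subset by (auto simp: F1_def F2_def elim: rev_finite_subset)
  moreover have "E \<noteq> {} \<and> E \<subseteq> {..<a}" if "E \<in> F1" for E using that by (simp add: F1_def)
  moreover have "E \<noteq> UNIV \<and> \<not> E \<subseteq> {..<a}" if "E \<in> F2" for E using that by (simp add: F2_def)
  ultimately obtain g where g: "g \<in> order_aut"
    and sq1: "\<And>E. E \<in> F1 \<Longrightarrow> g ` E \<in> cut_interval cm_points l1 r1"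
    and sq2: "\<And>E. E \<in> F2 \<Longrightarrow> g ` E \<in> cut_interval cm_points l2 r2"
    using order_aut_squeeze_cuts[of F1 a F2 l1 r1 b l2 r2] \<open>l1 < a\<close> \<open>a < r1\<close> \<open>a < b\<close> \<open>l2 < b\<close> \<open>b < r2\<close>
    by metis
  have "g ` E \<in> U E" if E: "E \<in> P" "U E \<noteq> P" for E
  proof -
    have gE: "g ` E \<in> P" using order_aut_image_points[OF g E(1)] .
    consider "E = {} \<or> E = UNIV" | "E \<in> F1" | "E \<in> F2" using E unfolding F1_def F2_def by blast
    then show ?thesis
    proof cases
      case 1
      then have "g ` E = E" "collapse a b E = E"
        using order_aut_surj[OF g] by (auto simp: collapse_def)
      then show ?thesis using mem[OF E(1)] by simp
    next
      case 2
      then show ?thesis using sq1[OF 2] gE nhd1 E by (auto simp: F1_def cut_interval_def)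
    next
      case 3
      then show ?thesis using sq2[OF 3] gE nhd2 E by (auto simp: F2_def cut_interval_def)
    qed
  qed
  then have "emb g \<in> Pi\<^sub>E P U" by (rule emb_in_box[OF g])
  with g show ?thesis by (rule that)
qed

lemma collapse_in_envelope:
  assumes "a < b"
  shows "restrict (collapse a b) P \<in> topspace envelope"
  unfolding topspace_envelope in_closure_of
proof (intro conjI allI impI)
  show "restrict (collapse a b) P \<in> topspace cut_power"
    by (simp add: restrict_PiE_iff topspace_K collapse_in_points)
  fix T assume "restrict (collapse a b) P \<in> T \<and> openin cut_power T"
  then have "openin cut_power T" "restrict (collapse a b) P \<in> T" by auto
  then obtain U where fin: "finite {E \<in> P. U E \<noteq> P}" and op: "\<And>E. E \<in> P \<Longrightarrow> openin K (U E)"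
    and mem: "restrict (collapse a b) P \<in> Pi\<^sub>E P U" and sub: "Pi\<^sub>E P U \<subseteq> T"
    using box_nhd by blast
  have "\<And>E. E \<in> P \<Longrightarrow> collapse a b E \<in> U E" using mem by (simp add: PiE_iff)
  then obtain g where "g \<in> order_aut" "emb g \<in> Pi\<^sub>E P U"
    using collapse_approx[OF assms fin op] by blast
  then show "\<exists>y. y \<in> emb ` order_aut \<and> y \<in> T" using sub by blast
qed

lemma id_approx_by_shift:
  assumes "openin envelope Q" "emb id \<in> Q"
  obtains g where "g \<in> order_aut" "emb g \<in> Q" "a < g a"
proof -
  have "openin (subtopology cut_power (cut_power closure_of emb ` order_aut)) Q"
    using assms(1) by (simp only: envelope_eq)
  then obtain T where T: "openin cut_power T" and Q_eq: "Q = T \<inter> topspace envelope"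
    unfolding openin_subtopology topspace_envelope by auto
  obtain U where fin: "finite {E \<in> P. U E \<noteq> P}" and op: "\<And>E. E \<in> P \<Longrightarrow> openin K (U E)"
    and mem: "emb id \<in> Pi\<^sub>E P U" and sub: "Pi\<^sub>E P U \<subseteq> T"
    using box_nhd[OF T] assms(2) Q_eq by blast
  have fixed: "E \<in> U E" if "E \<in> P" for E using mem that by (simp add: emb_eq PiE_iff)
  obtain l r where "l < a" "a < r" and nhd: "cut_interval P l r \<subseteq> U {..<a}"
    using lessThan_nhds[OF op fixed] lessThan_in_points by meson
  have "{E \<in> P. U E \<noteq> P} \<subseteq> cm_points" using points_subset by blast
  then obtain g where g: "g \<in> order_aut" "a < g a" "g a < r"
    and g_fixed: "\<And>E. E \<in> {E \<in> P. U E \<noteq> P} \<Longrightarrow> E \<noteq> {..<a} \<Longrightarrow> g ` E = E"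
    using order_aut_shift_fixing_cuts[OF fin _ \<open>l < a\<close> \<open>a < r\<close>] by blast
  have "g ` E \<in> U E" if E: "E \<in> P" "U E \<noteq> P" for E
  proof (cases "E = {..<a}")
    case True
    have "{..<g a} \<in> cut_interval P l r"
      using \<open>l < a\<close> g(2,3) by (intro lessThan_in_cut_interval lessThan_in_points) auto
    then show ?thesis using True nhd order_aut_image_lessThan[OF g(1)] by auto
  next
    case False
    then show ?thesis using g_fixed E fixed by simp
  qed
  then have "emb g \<in> Pi\<^sub>E P U" by (rule emb_in_box[OF g(1)])
  then have "emb g \<in> Q" using sub Q_eq emb_in_envelope[OF g(1)] by blast
  then show ?thesis using g by (intro that[of g]) simp_all
qed

lemma env_mult_apply: "E \<in> P \<Longrightarrow> env_mult K p q E = p (q E)"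
  by (simp add: env_mult_def compose_def topspace_K)

lemma openin_envelope_eval_preimage:
  assumes "continuous_map envelope envelope f" "D \<in> P" "openin K V"
  shows "openin envelope {q \<in> topspace envelope. f q D \<in> V}"
proof -
  have "continuous_map envelope K (\<lambda>q. q D)"
    unfolding envelope_eq
    by (rule continuous_map_from_subtopology[OF continuous_map_product_projection[OF assms(2)]])
  with assms(1) have "continuous_map envelope K ((\<lambda>q. q D) \<circ> f)"
    by (rule continuous_map_compose)
  from openin_continuous_map_preimage[OF this assms(3)] show ?thesis by simp
qed

theorem not_semitopological_monoid: "\<not> semitopological_monoid envelope (env_mult K)"
proof
  assume "semitopological_monoid envelope (env_mult K)"
  obtain a b :: 'a where "a < b" using exists_greater by blast
  obtain l where "l < a" using exists_less by blast
  define p where "p = restrict (collapse a b) P"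
  have "p \<in> topspace envelope" unfolding p_def using collapse_in_envelope[OF \<open>a < b\<close>] .
  then have "continuous_map envelope envelope (env_mult K p)"
    using \<open>semitopological_monoid envelope (env_mult K)\<close>
    unfolding semitopological_monoid_def by blast
  then have "openin envelope {q \<in> topspace envelope. env_mult K p q {..<a} \<in> cut_interval P l b}"
    by (rule openin_envelope_eval_preimage[OF _ lessThan_in_points openin_cut_interval])
  moreover have "env_mult K p (emb id) {..<a} = {..<a}"
    using \<open>l < a\<close> collapse_below[of "{..<a}" a b]
    by (auto simp: env_mult_apply emb_eq lessThan_in_points p_def)
  then have "emb id \<in> {q \<in> topspace envelope. env_mult K p q {..<a} \<in> cut_interval P l b}"
    using emb_in_envelope[OF id_in_order_aut] \<open>l < a\<close> \<open>a < b\<close>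
    by (simp add: lessThan_in_cut_interval lessThan_in_points)
  ultimately obtain g where g: "g \<in> order_aut" "a < g a"
    and "env_mult K p (emb g) {..<a} \<in> cut_interval P l b"
    using id_approx_by_shift by blast
  moreover have "collapse a b {..<g a} = {..<b}"
    using g(2) by (intro collapse_above) (auto simp: subset_iff dest: spec[of _ "g a"])
  then have "env_mult K p (emb g) {..<a} = {..<b}"
    using order_aut_image_lessThan[OF g(1)] by (simp add: env_mult_apply emb_eq lessThan_in_points p_def)
  ultimately show False by (simp add: cut_interval_def)
qed

end

lemma infinite_linorder_ex_less:
  assumes "infinite (UNIV :: 'a::linorder set)"
  shows "\<exists>u v :: 'a. u < v"
proof -
  obtain u :: 'a where True by blast
  have "UNIV \<noteq> {u}" using assms by (metis finite.emptyI finite.insertI)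
  then obtain v where "v \<noteq> u" by blast
  then show ?thesis by (metis neqE)
qed

theorem mainTheorem15:
  assumes "infinite (UNIV :: 'a::linorder_topology set)"
    and "ultrahomogeneous TYPE('a)"
  shows "\<not> sm_compactification (aut_top :: ('a \<Rightarrow> 'a) topology) (\<circ>)
            (env_emb cm_top ext_aut) (env_top cm_top ext_aut order_aut) (env_mult cm_top)
       \<and> \<not> sm_compactification (aut_top :: ('a \<Rightarrow> 'a) topology) (\<circ>)
            (env_emb c_top ext_aut) (env_top c_top ext_aut order_aut) (env_mult c_top)"
proof -
  interpret ultrahomogeneous_chain "TYPE('a)"
    using assms(2) infinite_linorder_ex_less[OF assms(1)] by unfold_locales
  interpret cm: cut_space "TYPE('a)" cm_top cm_points
    by unfold_locales (rule topspace_cm_top order_refl lessThan_in_cm_points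
        order_aut_image_cm_points cm_top_lessThan_nhds openin_cm_top_cut_interval | assumption)+
  interpret c: cut_space "TYPE('a)" c_top c_points
    by unfold_locales (rule topspace_c_top c_points_subset lessThan_in_c_points
        order_aut_image_c_points c_top_lessThan_nhds openin_c_top_cut_interval | assumption)+
  show ?thesis
    using cm.not_semitopological_monoid c.not_semitopological_monoid
    unfolding sm_compactification_def by blast
qed

end
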